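(* For $n\ge1$, $\left|\Pi_n\wr C_2(1^11^2,1^12^2,1^22^1)\right|=2B(n)+n-1$, where $B(n)$ is the $n$th Bell number.
   Context: For $n\ge0$ let $[n]=\{1,\dots,n\}$. A $2$-colored set partition of $[n]$ is a set partition of $[n]$ together with an assignment of a color from $\{1,2\}$ to each element; $\Pi_n\wr C_2$ is the set of these. For a set $S$ of patterns, $\Pi_n\wr C_2(S)$ is the set of such colored partitions avoiding every pattern in $S$ in the pattern sense. For the patterns used here: $\sigma$ contains $1^11^2$ iff there are $i<j$ in the same block with $i$ colored $1$ and $j$ colored $2$; $1^12^2$ iff there are $i<j$ in different blocks with $i$ colored $1$ and $j$ colored $2$; $1^22^1$ iff there are $i<j$ in different blocks with $i$ colored $2$ and $j$ colored $1$. $B(n)$ is the number of set partitions of $[n]$. *)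

theory Defs
  imports Main "HOL-Library.Disjoint_Sets" "HOL-Library.FuncSet"
begin

definition set_partitions :: "nat \<Rightarrow> nat set set set" where
  "set_partitions n = {P. partition_on {1..n} P}"

definition Bell :: "nat \<Rightarrow> nat" where
  "Bell n = card (set_partitions n)"

definition colored_partitions :: "nat \<Rightarrow> (nat set set \<times> (nat \<Rightarrow> nat)) set" where
  "colored_partitions n =
     {(P, c). partition_on {1..n} P \<and> c \<in> {1..n} \<rightarrow>\<^sub>E {1, 2::nat}}"

definition same_block :: "nat set set \<Rightarrow> nat \<Rightarrow> nat \<Rightarrow> bool" where
  "same_block P i j \<longleftrightarrow> (\<exists>B\<in>P. i \<in> B \<and> j \<in> B)"

definition contains_11_12 :: "nat \<Rightarrow> nat set set \<times> (nat \<Rightarrow> nat) \<Rightarrow> bool" where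
  "contains_11_12 n \<sigma> \<longleftrightarrow> (case \<sigma> of (P, c) \<Rightarrow>
     (\<exists>i\<in>{1..n}. \<exists>j\<in>{1..n}. i < j \<and> same_block P i j \<and> c i = 1 \<and> c j = 2))"

definition contains_11_22 :: "nat \<Rightarrow> nat set set \<times> (nat \<Rightarrow> nat) \<Rightarrow> bool" where
  "contains_11_22 n \<sigma> \<longleftrightarrow> (case \<sigma> of (P, c) \<Rightarrow>
     (\<exists>i\<in>{1..n}. \<exists>j\<in>{1..n}. i < j \<and> \<not> same_block P i j \<and> c i = 1 \<and> c j = 2))"

definition contains_12_21 :: "nat \<Rightarrow> nat set set \<times> (nat \<Rightarrow> nat) \<Rightarrow> bool" where
  "contains_12_21 n \<sigma> \<longleftrightarrow> (case \<sigma> of (P, c) \<Rightarrow>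
     (\<exists>i\<in>{1..n}. \<exists>j\<in>{1..n}. i < j \<and> \<not> same_block P i j \<and> c i = 2 \<and> c j = 1))"

definition avoiders :: "nat \<Rightarrow> (nat set set \<times> (nat \<Rightarrow> nat)) set" where
  "avoiders n = {\<sigma> \<in> colored_partitions n.
     \<not> contains_11_12 n \<sigma> \<and> \<not> contains_11_22 n \<sigma> \<and> \<not> contains_12_21 n \<sigma>}"

end

theory Submission
  imports Defs
begin

text \<open>Avoiding \<open>1\<^sup>11\<^sup>2\<close> and \<open>1\<^sup>12\<^sup>2\<close> together forbids any colour 1 before a colour 2, so an
  avoider is coloured 2 on an initial segment \<open>{1..k}\<close> and 1 on the rest. If \<open>k = 0\<close> or
  \<open>k = n\<close> the pattern \<open>1\<^sup>22\<^sup>1\<close> cannot occur and every partition is allowed, giving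
  \<open>2 B(n)\<close> avoiders. For \<open>0 < k < n\<close>, avoiding \<open>1\<^sup>22\<^sup>1\<close> forces every element of
  \<open>{1..k}\<close> into the block of every element of \<open>{k+1..n}\<close>, hence a single block; this gives
  the remaining \<open>n - 1\<close> avoiders.\<close>

definition prefix_colouring :: "nat \<Rightarrow> nat \<Rightarrow> nat \<Rightarrow> nat" where
  "prefix_colouring n k = restrict (\<lambda>i. if i \<le> k then 2 else 1) {1..n}"

lemma prefix_colouring_apply:
  "i \<in> {1..n} \<Longrightarrow> prefix_colouring n k i = (if i \<le> k then 2 else 1)"
  unfolding prefix_colouring_def by simp

lemma prefix_colouring_eq_2_iff: "i \<in> {1..n} \<Longrightarrow> prefix_colouring n k i = 2 \<longleftrightarrow> i \<le> k"
  by (simp add: prefix_colouring_apply)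

lemma prefix_colouring_eq_1_iff: "i \<in> {1..n} \<Longrightarrow> prefix_colouring n k i = 1 \<longleftrightarrow> k < i"
  by (simp add: prefix_colouring_apply)

lemma prefix_colouring_in_PiE: "prefix_colouring n k \<in> {1..n} \<rightarrow>\<^sub>E {1, 2}"
  unfolding prefix_colouring_def by auto

lemma inj_on_prefix_colouring: "inj_on (prefix_colouring n) {..n}"
proof (rule inj_onI)
  fix k l assume kl: "k \<in> {..n}" "l \<in> {..n}" and eq: "prefix_colouring n k = prefix_colouring n l"
  show "k = l"
  proof (rule ccontr)
    assume "k \<noteq> l"
    then obtain a b where ab: "a < b" "b \<le> n" "{a, b} = {k, l}"
      using kl by (metis atMost_iff insert_commute linorder_neqE_nat)
    have "prefix_colouring n a b = prefix_colouring n b b"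
      using eq ab(3) by (metis doubleton_eq_iff)
    then show False
      using ab unfolding prefix_colouring_def by simp
  qed
qed

lemma prefix_colouring_if_no_ascent:
  assumes c: "c \<in> {1..n} \<rightarrow>\<^sub>E {1, 2::nat}"
    and no_ascent: "\<And>i j. i \<in> {1..n} \<Longrightarrow> j \<in> {1..n} \<Longrightarrow> i < j \<Longrightarrow> c i = 1 \<Longrightarrow> c j \<noteq> 2"
  obtains k where "k \<le> n" "c = prefix_colouring n k"
proof -
  define k where "k = Max (insert 0 {i \<in> {1..n}. c i = 2})"
  have k_max: "i \<le> k" if "i \<in> {1..n}" "c i = 2" for i
    using that unfolding k_def by simp
  have k_in: "k = 0 \<or> (k \<in> {1..n} \<and> c k = 2)"
    using Max_in[of "insert 0 {i \<in> {1..n}. c i = 2}"] unfolding k_def by auto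
  have "k \<le> n"
    using k_in by auto
  moreover have "c = prefix_colouring n k"
  proof
    fix i
    show "c i = prefix_colouring n k i"
    proof (cases "i \<in> {1..n}")
      case True
      then have "c i \<in> {1, 2}"
        using c by blast
      moreover have "c i \<noteq> 1" if "i \<le> k"
        using no_ascent[of i k] k_in k_max[of i] True that by (cases "i = k") auto
      moreover have "c i \<noteq> 2" if "k < i"
        using k_max[of i] True that by auto
      ultimately show ?thesis
        using True unfolding prefix_colouring_def by auto
    next
      case False
      then show ?thesis
        using c unfolding prefix_colouring_def by (auto simp: PiE_def extensional_def)
    qed
  qed
  ultimately show thesis
    using that by blast
qed

lemma not_contains_ascent_prefix_colouring:
  "\<not> contains_11_12 n (P, prefix_colouring n k)" "\<not> contains_11_22 n (P, prefix_colouring n k)"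
  unfolding contains_11_12_def contains_11_22_def by (auto simp: prefix_colouring_apply)

lemma contains_12_21_prefix_colouring_iff:
  "contains_12_21 n (P, prefix_colouring n k) \<longleftrightarrow>
     (\<exists>i\<in>{1..n}. \<exists>j\<in>{1..n}. i \<le> k \<and> k < j \<and> \<not> same_block P i j)"
proof
  assume "contains_12_21 n (P, prefix_colouring n k)"
  then obtain i j where ij: "i \<in> {1..n}" "j \<in> {1..n}" "\<not> same_block P i j"
    and colours: "prefix_colouring n k i = 2" "prefix_colouring n k j = 1"
    unfolding contains_12_21_def prod.case by blast
  have "i \<le> k" "k < j"
    using colours prefix_colouring_eq_2_iff[OF ij(1)] prefix_colouring_eq_1_iff[OF ij(2)] by simp_all
  then show "\<exists>i\<in>{1..n}. \<exists>j\<in>{1..n}. i \<le> k \<and> k < j \<and> \<not> same_block P i j"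
    using ij by blast
next
  assume "\<exists>i\<in>{1..n}. \<exists>j\<in>{1..n}. i \<le> k \<and> k < j \<and> \<not> same_block P i j"
  then obtain i j where ij: "i \<in> {1..n}" "j \<in> {1..n}" "i \<le> k" "k < j" "\<not> same_block P i j"
    by blast
  then have "i < j" "prefix_colouring n k i = 2" "prefix_colouring n k j = 1"
    using prefix_colouring_eq_2_iff[OF ij(1)] prefix_colouring_eq_1_iff[OF ij(2)] by simp_all
  then show "contains_12_21 n (P, prefix_colouring n k)"
    unfolding contains_12_21_def prod.case using ij by blast
qed

lemma prefix_colouring_in_avoiders_iff:
  "(P, prefix_colouring n k) \<in> avoiders n \<longleftrightarrow> partition_on {1..n} P \<and>
     (\<forall>i\<in>{1..n}. \<forall>j\<in>{1..n}. i \<le> k \<longrightarrow> k < j \<longrightarrow> same_block P i j)"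
proof -
  have "(P, prefix_colouring n k) \<in> colored_partitions n \<longleftrightarrow> partition_on {1..n} P"
    using prefix_colouring_in_PiE[of n k] unfolding colored_partitions_def by simp
  then show ?thesis
    unfolding avoiders_def
    by (simp add: not_contains_ascent_prefix_colouring contains_12_21_prefix_colouring_iff)
qed

lemma same_block_sym: "same_block P x y \<Longrightarrow> same_block P y x"
  unfolding same_block_def by auto

lemma same_block_trans:
  assumes "partition_on A P" "same_block P x y" "same_block P y z"
  shows "same_block P x z"
proof -
  obtain B where B: "B \<in> P" "x \<in> B" "y \<in> B"
    using assms(2) unfolding same_block_def by auto
  obtain C where C: "C \<in> P" "y \<in> C" "z \<in> C"
    using assms(3) unfolding same_block_def by auto
  have "B = C"
    using assms(1) B C unfolding partition_on_def disjoint_def by blast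
  then show ?thesis
    using B C unfolding same_block_def by auto
qed

lemma partition_on_eq_singleton_if_same_block:
  assumes P: "partition_on A P" and "A \<noteq> {}"
    and connected: "\<And>x y. x \<in> A \<Longrightarrow> y \<in> A \<Longrightarrow> same_block P x y"
  shows "P = {A}"
proof -
  have "B = A" if B: "B \<in> P" for B
  proof
    show "B \<subseteq> A"
      using P B unfolding partition_on_def by auto
    obtain x where x: "x \<in> B"
      using P B unfolding partition_on_def by (metis ex_in_conv)
    show "A \<subseteq> B"
    proof
      fix y assume y: "y \<in> A"
      obtain C where C: "C \<in> P" "x \<in> C" "y \<in> C"
        using connected[OF _ y, of x] x \<open>B \<subseteq> A\<close> unfolding same_block_def by auto
      have "B = C"
        using P B x C unfolding partition_on_def disjoint_def by blast
      then show "y \<in> B"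
        using C by simp
    qed
  qed
  moreover have "P \<noteq> {}"
    using P \<open>A \<noteq> {}\<close> unfolding partition_on_def by auto
  ultimately show ?thesis
    by auto
qed

lemma partition_on_eq_singleton_if_cut_connected:
  assumes P: "partition_on {1..n} P" and k: "0 < k" "k < n"
    and cut: "\<And>i j. i \<in> {1..n} \<Longrightarrow> j \<in> {1..n} \<Longrightarrow> i \<le> k \<Longrightarrow> k < j \<Longrightarrow> same_block P i j"
  shows "P = {{1..n}}"
proof (rule partition_on_eq_singleton_if_same_block[OF P])
  have to_n: "same_block P x n" if x: "x \<in> {1..n}" for x
  proof (cases "x \<le> k")
    case True
    then show ?thesis
      using cut x k by simp
  next
    case False
    then have "same_block P x k"
      using cut[of k x] x k by (auto intro: same_block_sym)
    moreover have "same_block P k n"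
      using cut[of k n] k by simp
    ultimately show ?thesis
      using same_block_trans[OF P] by blast
  qed
  show "same_block P x y" if "x \<in> {1..n}" "y \<in> {1..n}" for x y
    using same_block_trans[OF P to_n same_block_sym[OF to_n]] that by blast
  show "{1..n} \<noteq> {}"
    using k by simp
qed

lemma avoiders_eq_image:
  "avoiders n = (\<lambda>(P, k). (P, prefix_colouring n k)) `
     (set_partitions n \<times> {0, n} \<union> {{{1..n}}} \<times> {1..<n})"
  (is "_ = ?f ` ?I")
proof
  show "avoiders n \<subseteq> ?f ` ?I"
  proof
    fix \<sigma> assume \<sigma>: "\<sigma> \<in> avoiders n"
    obtain P c where \<sigma>_eq: "\<sigma> = (P, c)"
      by (cases \<sigma>)
    have c: "c \<in> {1..n} \<rightarrow>\<^sub>E {1, 2}"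
      using \<sigma> unfolding \<sigma>_eq avoiders_def colored_partitions_def by simp
    obtain k where k: "k \<le> n" "c = prefix_colouring n k"
    proof (rule prefix_colouring_if_no_ascent[OF c])
      show "c j \<noteq> 2" if "i \<in> {1..n}" "j \<in> {1..n}" "i < j" "c i = 1" for i j
        using \<sigma> that
        unfolding \<sigma>_eq avoiders_def contains_11_12_def contains_11_22_def by blast
    qed
    have "(P, prefix_colouring n k) \<in> avoiders n"
      using \<sigma> unfolding \<sigma>_eq k(2) .
    then have P: "partition_on {1..n} P"
      and cut: "\<And>i j. i \<in> {1..n} \<Longrightarrow> j \<in> {1..n} \<Longrightarrow> i \<le> k \<Longrightarrow> k < j \<Longrightarrow> same_block P i j"
      unfolding prefix_colouring_in_avoiders_iff by blast+
    have "k \<in> {0, n} \<or> (k \<in> {1..<n} \<and> P = {{1..n}})"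
      using k(1) partition_on_eq_singleton_if_cut_connected[OF P _ _ cut] by fastforce
    then have "(P, k) \<in> ?I"
      using P unfolding set_partitions_def by blast
    then show "\<sigma> \<in> ?f ` ?I"
      by (rule rev_image_eqI) (simp add: \<sigma>_eq k(2))
  qed
next
  show "?f ` ?I \<subseteq> avoiders n"
  proof clarify
    fix P k assume "(P, k) \<in> ?I"
    then consider "partition_on {1..n} P" "k = 0 \<or> k = n" | "P = {{1..n}}" "k \<in> {1..<n}"
      unfolding set_partitions_def by blast
    then show "(P, prefix_colouring n k) \<in> avoiders n"
    proof cases
      case 1
      then show ?thesis
        by (auto simp: prefix_colouring_in_avoiders_iff)
    next
      case 2
      then have "partition_on {1..n} P"
        by (auto intro: partition_on_space)
      then show ?thesis
        using 2 by (simp add: prefix_colouring_in_avoiders_iff same_block_def)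
    qed
  qed
qed

lemma finite_set_partitions: "finite (set_partitions n)"
proof (rule finite_subset)
  show "set_partitions n \<subseteq> Pow (Pow {1..n})"
    unfolding set_partitions_def partition_on_def by auto
qed simp

theorem mainTheorem15:
  fixes n :: nat
  assumes "n \<ge> 1"
  shows "card (avoiders n) = 2 * Bell n + n - 1"
proof -
  let ?I = "set_partitions n \<times> {0, n} \<union> {{{1..n}}} \<times> {1..<n}"
  have "inj_on (\<lambda>(P, k). (P, prefix_colouring n k)) ?I"
    using inj_on_prefix_colouring[of n] by (fastforce simp: inj_on_def)
  then have "card (avoiders n) = card ?I"
    by (simp add: avoiders_eq_image card_image)
  also have "\<dots> = card (set_partitions n \<times> {0, n}) + card ({{{1..n}}} \<times> {1..<n})"
    by (rule card_Un_disjoint) (auto simp: finite_set_partitions)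
  also have "\<dots> = 2 * Bell n + (n - 1)"
    using assms by (simp add: card_cartesian_product Bell_def)
  finally show ?thesis
    using assms by simp
qed

end
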